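(* Let $Q\in\mathbb{R}^{n\times n}$ be symmetric positive definite, $\|x\|=\sqrt{x^TQx}$, $\|u\|_*=\sqrt{u^TQ^{-1}u}$. Let $f\colon\mathbb{R}^n\to\mathbb{R}$ be convex and differentiable with $\|\nabla f(x)-\nabla f(y)\|_*\le L\|x-y\|$ for all $x,y$, with a minimizer $x_\star$, $f_\star=f(x_\star)$. Let $0<t\le1$, and let $\{\theta_k\}_{k=0}^\infty$ be positive with $\theta_0=1$ and $0\le\theta_{k+1}^2-\theta_{k+1}\le\theta_k^2$ for $k\ge0$. Given $x_0$, let $z_0=x_0$ and for $k\ge0$ \[ y_{k+1}=x_k-\tfrac1LQ^{-1}\nabla f(x_k),\quad z_{k+1}=z_k-\tfrac{2t\theta_k}{L}Q^{-1}\nabla f(x_k),\quad x_{k+1}=\Big(1-\tfrac1{\theta_{k+1}}\Big)y_{k+1}+\tfrac1{\theta_{k+1}}z_{k+1}. \] Then for $k=1,2,\dots$, \[ f(y_k)-f_\star\le\frac{L\|x_0-x_\star\|^2}{4t\theta_{k-1}^2}. \]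
   Context: For $t=1/2$ this is Nesterov's accelerated gradient method and for $t=1$ it is OGM (when $Q=I$). *)

theory Defs
  imports "HOL-Analysis.Analysis"
begin

definition qnorm :: "real^'n^'n \<Rightarrow> real^'n \<Rightarrow> real" where
  "qnorm Q x = sqrt (x \<bullet> (Q *v x))"

definition qdnorm :: "real^'n^'n \<Rightarrow> real^'n \<Rightarrow> real" where
  "qdnorm Q u = sqrt (u \<bullet> (matrix_inv Q *v u))"

end

(* Lyapunov argument. Put S_k = f(x_k) - f_* - ||g(x_k)||_*^2/(2L); by the descent lemma
   f(y_{k+1}) - f_* <= S_k, and S_k >= 0. The potential
     theta_k^2 S_k + L/(4t) ||z_{k+1} - x_*||^2
   is at most L/(4t) ||x_0 - x_*||^2 for k = 0 and does not increase: the co-coercivity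
   inequality f(a) >= f(b) + <g(b), a - b> + ||g(a) - g(b)||_*^2/(2L), applied to the pairs
   (x_*, x_{k+1}) and (x_k, x_{k+1}) with weights theta_{k+1} and theta_{k+1}(theta_{k+1} - 1),
   bounds the cross term of ||z_{k+2} - x_*||^2, because
   z_{k+1} = theta_{k+1} x_{k+1} - (theta_{k+1} - 1) y_{k+1}. What is left has the right sign
   since theta_{k+1}^2 - theta_{k+1} <= theta_k^2 and t <= 1. *)

theory Submission
  imports Defs
begin

lemma convex_on_along_line:
  fixes F :: "'a::real_vector \<Rightarrow> real"
  assumes "convex_on UNIV F"
  shows "convex_on UNIV (\<lambda>s. F (b + s *\<^sub>R d))"
proof (rule convex_onI)
  fix a r s :: real
  assume "0 < a" "a < 1"
  moreover have "b + ((1 - a) *\<^sub>R r + a *\<^sub>R s) *\<^sub>R d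
      = (1 - a) *\<^sub>R (b + r *\<^sub>R d) + a *\<^sub>R (b + s *\<^sub>R d)"
    by (simp add: algebra_simps)
  ultimately show "F (b + ((1 - a) *\<^sub>R r + a *\<^sub>R s) *\<^sub>R d)
      \<le> (1 - a) * F (b + r *\<^sub>R d) + a * F (b + s *\<^sub>R d)"
    using convex_onD[OF assms] by simp
qed simp

lemma has_derivative_along_line:
  fixes F :: "'a::real_inner \<Rightarrow> real"
  assumes "(F has_derivative (\<lambda>h. G \<bullet> h)) (at (b + s *\<^sub>R d))"
  shows "((\<lambda>r. F (b + r *\<^sub>R d)) has_real_derivative (G \<bullet> d)) (at s)"
proof -
  have "((\<lambda>r. b + r *\<^sub>R d) has_derivative (\<lambda>r. r *\<^sub>R d)) (at s)"
    by (auto intro!: derivative_eq_intros)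
  then have "((\<lambda>r. F (b + r *\<^sub>R d)) has_derivative (\<lambda>r. G \<bullet> (r *\<^sub>R d))) (at s)"
    using has_derivative_compose assms by blast
  then show ?thesis
    by (rule has_derivative_imp_has_field_derivative) simp
qed

lemma convex_on_gradient_inequality:
  fixes F :: "'a::real_inner \<Rightarrow> real"
  assumes "convex_on UNIV F" and "(F has_derivative (\<lambda>h. G \<bullet> h)) (at b)"
  shows "F b + G \<bullet> (u - b) \<le> F u"
proof -
  let ?\<psi> = "\<lambda>s. F (b + s *\<^sub>R (u - b))"
  have "?\<psi> 1 - ?\<psi> 0 \<ge> (G \<bullet> (u - b)) * (1 - 0)"
  proof (rule convex_on_imp_above_tangent[where A = UNIV])
    show "(?\<psi> has_real_derivative G \<bullet> (u - b)) (at 0 within UNIV)"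
      using assms(2) by (intro has_derivative_along_line) simp
  qed (use assms(1) convex_on_along_line in auto)
  then show ?thesis by simp
qed

lemma gradient_eq_0_at_minimizer:
  fixes F :: "'a::real_inner \<Rightarrow> real"
  assumes "(F has_derivative (\<lambda>h. G \<bullet> h)) (at x)" and "\<And>u. F x \<le> F u"
  shows "G = 0"
proof -
  have "(\<lambda>h. G \<bullet> h) = (\<lambda>h. 0)"
    using assms by (intro has_derivative_local_min) auto
  then show ?thesis
    by (metis inner_eq_zero_iff)
qed

lemma qdnorm_minus [simp]: "qdnorm Q (- u) = qdnorm Q u"
  by (simp add: qdnorm_def vec.neg)

locale spd_matrix =
  fixes Q :: "real^'n^'n"
  assumes symmetric: "transpose Q = Q"
    and positive_definite: "\<And>v. v \<noteq> 0 \<Longrightarrow> 0 < v \<bullet> (Q *v v)"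
begin

lemma inner_matrix_commute: "a \<bullet> (Q *v b) = b \<bullet> (Q *v a)"
  by (metis dot_lmul_matrix inner_commute symmetric vector_transpose_matrix)

lemma invertible: "invertible Q"
proof -
  have "Q *v v = 0 \<Longrightarrow> v = 0" for v
    using positive_definite[of v] by force
  then show ?thesis
    using matrix_left_invertible_ker invertible_left_inverse by blast
qed

lemma matrix_inv_cancel [simp]:
  "Q *v (matrix_inv Q *v u) = u" "matrix_inv Q *v (Q *v u) = u"
proof -
  have "Q ** matrix_inv Q = mat 1 \<and> matrix_inv Q ** Q = mat 1"
    using invertible unfolding invertible_def matrix_inv_def by (rule someI_ex)
  then show "Q *v (matrix_inv Q *v u) = u" "matrix_inv Q *v (Q *v u) = u"
    by (simp_all add: matrix_vector_mul_assoc)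
qed

lemma inner_matrix_inv_commute: "a \<bullet> (matrix_inv Q *v b) = b \<bullet> (matrix_inv Q *v a)"
  by (metis inner_commute inner_matrix_commute matrix_inv_cancel(1))

lemma quadratic_form_nonneg: "0 \<le> v \<bullet> (Q *v v)"
  using positive_definite by (cases "v = 0") (auto intro: less_imp_le)

lemma qnorm_square: "(qnorm Q v)\<^sup>2 = v \<bullet> (Q *v v)"
  unfolding qnorm_def using quadratic_form_nonneg by simp

lemma dual_form_nonneg: "0 \<le> u \<bullet> (matrix_inv Q *v u)"
  using quadratic_form_nonneg[of "matrix_inv Q *v u"] by (simp add: inner_commute)

lemma qdnorm_square: "(qdnorm Q u)\<^sup>2 = u \<bullet> (matrix_inv Q *v u)"
  unfolding qdnorm_def using dual_form_nonneg by simp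

lemma qnorm_nonneg: "0 \<le> qnorm Q v"
  unfolding qnorm_def using quadratic_form_nonneg by simp

lemma qnorm_matrix_inv: "qnorm Q (matrix_inv Q *v u) = qdnorm Q u"
  unfolding qnorm_def qdnorm_def by (simp add: inner_commute)

lemma qnorm_scaleR: "qnorm Q (c *\<^sub>R v) = \<bar>c\<bar> * qnorm Q v"
proof -
  have "c *\<^sub>R v \<bullet> (Q *v (c *\<^sub>R v)) = c\<^sup>2 * (v \<bullet> (Q *v v))"
    by (simp add: matrix_vector_mult_scaleR power2_eq_square)
  then show ?thesis
    unfolding qnorm_def by (simp add: real_sqrt_mult)
qed

lemma quadratic_form_Cauchy_Schwarz:
  "(v \<bullet> (Q *v w))\<^sup>2 \<le> (v \<bullet> (Q *v v)) * (w \<bullet> (Q *v w))"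
proof (cases "v = 0")
  case False
  let ?a = "v \<bullet> (Q *v v)" and ?b = "v \<bullet> (Q *v w)" and ?c = "w \<bullet> (Q *v w)"
  have a: "?a > 0" using positive_definite False by blast
  define l where "l = ?b / ?a"
  have "0 \<le> (w - l *\<^sub>R v) \<bullet> (Q *v (w - l *\<^sub>R v))"
    by (rule quadratic_form_nonneg)
  also have "\<dots> = ?c - 2 * l * ?b + l\<^sup>2 * ?a"
    using inner_matrix_commute[of w v]
    by (simp add: algebra_simps vec.diff inner_diff_left inner_diff_right power2_eq_square)
  also have "\<dots> = ?c - ?b\<^sup>2 / ?a"
    using a unfolding l_def by (simp add: field_simps power2_eq_square)
  finally show ?thesis
    using a by (simp add: field_simps mult.commute)
qed simp

lemma inner_le_qdnorm_qnorm: "u \<bullet> v \<le> qdnorm Q u * qnorm Q v"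
proof -
  define w where "w = matrix_inv Q *v u"
  have "u \<bullet> v = v \<bullet> (Q *v w)"
    by (simp add: w_def inner_commute)
  also have "\<dots> \<le> sqrt ((v \<bullet> (Q *v v)) * (w \<bullet> (Q *v w)))"
    using quadratic_form_Cauchy_Schwarz real_le_rsqrt by blast
  also have "\<dots> = qdnorm Q u * qnorm Q v"
    unfolding qdnorm_def qnorm_def w_def by (simp add: real_sqrt_mult inner_commute)
  finally show ?thesis .
qed

lemma qnorm_diff_scaled_dual_square:
  "(qnorm Q (v - c *\<^sub>R (matrix_inv Q *v u)))\<^sup>2
     = (qnorm Q v)\<^sup>2 - 2 * c * (u \<bullet> v) + c\<^sup>2 * (qdnorm Q u)\<^sup>2"
  unfolding qnorm_square qdnorm_square
  using inner_matrix_commute[of "matrix_inv Q *v u" v]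
  by (simp add: algebra_simps vec.diff inner_diff_left inner_diff_right power2_eq_square inner_commute)

lemma qdnorm_diff_square:
  "(qdnorm Q (a - b))\<^sup>2 = (qdnorm Q a)\<^sup>2 - 2 * (a \<bullet> (matrix_inv Q *v b)) + (qdnorm Q b)\<^sup>2"
  unfolding qdnorm_square using inner_matrix_inv_commute[of a b]
  by (simp add: vec.diff inner_diff_left inner_diff_right)

end

locale lipschitz_gradient = spd_matrix Q for Q :: "real^'n^'n" +
  fixes f :: "real^'n \<Rightarrow> real" and g :: "real^'n \<Rightarrow> real^'n" and L :: real
  assumes gradient: "\<And>u. (f has_derivative (\<lambda>h. g u \<bullet> h)) (at u)"
    and L_pos: "0 < L"
    and gradient_Lipschitz: "\<And>u v. qdnorm Q (g u - g v) \<le> L * qnorm Q (u - v)"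
begin

lemma descent_lemma: "f (b + h) \<le> f b + g b \<bullet> h + L / 2 * (qnorm Q h)\<^sup>2"
proof -
  define \<phi> where "\<phi> s = f (b + s *\<^sub>R h) - s * (g b \<bullet> h) - L / 2 * s\<^sup>2 * (qnorm Q h)\<^sup>2" for s
  have "\<phi> 1 \<le> \<phi> 0"
  proof (rule DERIV_nonpos_imp_nonincreasing[of 0 1 \<phi>])
    fix s :: real
    assume s: "0 \<le> s" "s \<le> 1"
    have "(\<phi> has_real_derivative
        g (b + s *\<^sub>R h) \<bullet> h - g b \<bullet> h - L * s * (qnorm Q h)\<^sup>2) (at s)"
      unfolding \<phi>_def using has_derivative_along_line[OF gradient]
      by (auto intro!: derivative_eq_intros)
    moreover have "(g (b + s *\<^sub>R h) - g b) \<bullet> h \<le> L * s * (qnorm Q h)\<^sup>2"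
    proof -
      have "(g (b + s *\<^sub>R h) - g b) \<bullet> h \<le> qdnorm Q (g (b + s *\<^sub>R h) - g b) * qnorm Q h"
        by (rule inner_le_qdnorm_qnorm)
      also have "\<dots> \<le> L * qnorm Q (s *\<^sub>R h) * qnorm Q h"
        using gradient_Lipschitz[of "b + s *\<^sub>R h" b] qnorm_nonneg
        by (intro mult_right_mono) auto
      finally show ?thesis
        using s by (simp add: qnorm_scaleR power2_eq_square)
    qed
    ultimately show "\<exists>d. (\<phi> has_real_derivative d) (at s) \<and> d \<le> 0"
      by (auto simp: inner_diff_left)
  qed simp
  then show ?thesis
    unfolding \<phi>_def by simp
qed

lemma gradient_step_decrease:
  "f (b - (1 / L) *\<^sub>R (matrix_inv Q *v g b)) \<le> f b - (qdnorm Q (g b))\<^sup>2 / (2 * L)"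
proof -
  let ?h = "(- 1 / L) *\<^sub>R (matrix_inv Q *v g b)"
  have "qnorm Q ?h = qdnorm Q (g b) / L"
    unfolding qnorm_scaleR qnorm_matrix_inv using L_pos by simp
  then have "f (b + ?h) \<le> f b - (1 / L) * (qdnorm Q (g b))\<^sup>2 + L / 2 * (qdnorm Q (g b) / L)\<^sup>2"
    using descent_lemma[of b ?h] by (simp add: qdnorm_square)
  also have "\<dots> = f b - (qdnorm Q (g b))\<^sup>2 / (2 * L)"
    using L_pos by (simp add: field_simps power2_eq_square)
  finally show ?thesis
    by (simp add: scaleR_diff_left)
qed

end

locale convex_lipschitz_gradient = lipschitz_gradient +
  assumes convex: "convex_on UNIV f"
begin

lemma cocoercivity: "f b + g b \<bullet> (a - b) + (qdnorm Q (g a - g b))\<^sup>2 / (2 * L) \<le> f a"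
proof -
  define \<phi> where "\<phi> = (\<lambda>u. f u - g b \<bullet> u)"
  interpret \<phi>: lipschitz_gradient Q \<phi> "\<lambda>u. g u - g b" L
    by unfold_locales
      (auto simp: \<phi>_def inner_diff_left L_pos gradient_Lipschitz
        intro!: derivative_eq_intros gradient)
  have "\<phi> b \<le> \<phi> u" for u
    using convex_on_gradient_inequality[OF convex gradient, of b u]
    by (simp add: \<phi>_def inner_diff_right)
  then have "\<phi> b \<le> \<phi> (a - (1 / L) *\<^sub>R (matrix_inv Q *v (g a - g b)))" .
  also have "\<dots> \<le> \<phi> a - (qdnorm Q (g a - g b))\<^sup>2 / (2 * L)"
    by (rule \<phi>.gradient_step_decrease)
  finally show ?thesis
    unfolding \<phi>_def by (simp add: inner_diff_right)
qed

end

locale accelerated_gradient_method = convex_lipschitz_gradient Q f g L for Q f g L +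
  fixes t :: real and \<theta> :: "nat \<Rightarrow> real" and x y z :: "nat \<Rightarrow> real^'n" and xs :: "real^'n"
  assumes minimizer: "\<And>u. f xs \<le> f u"
    and t_pos: "0 < t" and t_le_1: "t \<le> 1"
    and \<theta>_pos: "\<And>k. 0 < \<theta> k"
    and \<theta>_0: "\<theta> 0 = 1"
    and \<theta>_Suc_lower: "\<And>k. 0 \<le> (\<theta> (Suc k))\<^sup>2 - \<theta> (Suc k)"
    and \<theta>_Suc_upper: "\<And>k. (\<theta> (Suc k))\<^sup>2 - \<theta> (Suc k) \<le> (\<theta> k)\<^sup>2"
    and z_0: "z 0 = x 0"
    and y_Suc: "\<And>k. y (Suc k) = x k - (1 / L) *\<^sub>R (matrix_inv Q *v g (x k))"
    and z_Suc: "\<And>k. z (Suc k) = z k - (2 * t * \<theta> k / L) *\<^sub>R (matrix_inv Q *v g (x k))"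
    and x_Suc: "\<And>k. x (Suc k) = (1 - 1 / \<theta> (Suc k)) *\<^sub>R y (Suc k) + (1 / \<theta> (Suc k)) *\<^sub>R z (Suc k)"
begin

definition gap_bound :: "nat \<Rightarrow> real" where
  "gap_bound k = f (x k) - f xs - (qdnorm Q (g (x k)))\<^sup>2 / (2 * L)"

definition potential :: "nat \<Rightarrow> real" where
  "potential k = (\<theta> k)\<^sup>2 * gap_bound k + L / (4 * t) * (qnorm Q (z (Suc k) - xs))\<^sup>2"

lemma f_y_Suc_le_gap_bound: "f (y (Suc k)) - f xs \<le> gap_bound k"
  using gradient_step_decrease[of "x k"] unfolding gap_bound_def y_Suc by simp

lemma gap_bound_nonneg: "0 \<le> gap_bound k"
  using f_y_Suc_le_gap_bound[of k] minimizer[of "y (Suc k)"] by simp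

lemma gap_bound_le_inner_gradient:
  "gap_bound k + (qdnorm Q (g (x k)))\<^sup>2 / L \<le> g (x k) \<bullet> (x k - xs)"
proof -
  have "g xs = 0"
    using gradient minimizer by (rule gradient_eq_0_at_minimizer)
  then have "f (x k) + g (x k) \<bullet> (xs - x k) + (qdnorm Q (g (x k)))\<^sup>2 / (2 * L) \<le> f xs"
    using cocoercivity[where a = xs and b = "x k"] by simp
  then show ?thesis
    unfolding gap_bound_def by (simp add: inner_diff_right)
qed

lemma gap_bound_Suc_le:
  "gap_bound (Suc k) - gap_bound k + (qdnorm Q (g (x (Suc k))))\<^sup>2 / L
     \<le> g (x (Suc k)) \<bullet> (x (Suc k) - y (Suc k))"
proof -
  let ?g = "g (x k)" and ?g' = "g (x (Suc k))"
  let ?p = "?g' \<bullet> (matrix_inv Q *v ?g)"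
  have "f (x (Suc k)) + (?g' \<bullet> x k - ?g' \<bullet> x (Suc k)) + (qdnorm Q (?g - ?g'))\<^sup>2 / (2 * L)
      \<le> f (x k)"
    using cocoercivity[where a = "x k" and b = "x (Suc k)"] by (simp add: inner_diff_right)
  moreover have "(qdnorm Q (?g - ?g'))\<^sup>2 / (2 * L)
      = (qdnorm Q ?g)\<^sup>2 / (2 * L) - ?p / L + (qdnorm Q ?g')\<^sup>2 / (2 * L)"
    using qdnorm_diff_square[of ?g ?g'] inner_matrix_inv_commute[of ?g ?g'] L_pos
    by (simp add: field_simps)
  moreover have "?g' \<bullet> (x (Suc k) - y (Suc k)) = ?g' \<bullet> x (Suc k) - ?g' \<bullet> x k + ?p / L"
    unfolding y_Suc by (simp add: inner_diff_right)
  moreover have "(qdnorm Q ?g')\<^sup>2 / L = 2 * ((qdnorm Q ?g')\<^sup>2 / (2 * L))"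
    by simp
  ultimately show ?thesis
    unfolding gap_bound_def by linarith
qed

lemma \<theta>_Suc_ge_1: "1 \<le> \<theta> (Suc k)"
proof -
  have "0 \<le> \<theta> (Suc k) * (\<theta> (Suc k) - 1)"
    using \<theta>_Suc_lower[of k] by (simp add: algebra_simps power2_eq_square)
  then show ?thesis
    using \<theta>_pos[of "Suc k"] by (simp add: zero_le_mult_iff)
qed

lemma z_Suc_minus_minimizer:
  "z (Suc k) - xs = (x (Suc k) - xs) + (\<theta> (Suc k) - 1) *\<^sub>R (x (Suc k) - y (Suc k))"
proof -
  have "\<theta> (Suc k) *\<^sub>R x (Suc k) = (\<theta> (Suc k) - 1) *\<^sub>R y (Suc k) + z (Suc k)"
    using \<theta>_pos[of "Suc k"] unfolding x_Suc by (simp add: algebra_simps)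
  then show ?thesis
    by (simp add: algebra_simps)
qed

lemma inner_gradient_z_Suc_ge:
  "(\<theta> (Suc k))\<^sup>2 * (gap_bound (Suc k) + (qdnorm Q (g (x (Suc k))))\<^sup>2 / L)
     - ((\<theta> (Suc k))\<^sup>2 - \<theta> (Suc k)) * gap_bound k
   \<le> \<theta> (Suc k) * (g (x (Suc k)) \<bullet> (z (Suc k) - xs))"
proof -
  define \<theta>' where "\<theta>' = \<theta> (Suc k)"
  define D where "D = (qdnorm Q (g (x (Suc k))))\<^sup>2 / L"
  have "\<theta>'\<^sup>2 * (gap_bound (Suc k) + D) - (\<theta>'\<^sup>2 - \<theta>') * gap_bound k
      = \<theta>' * (gap_bound (Suc k) + D) + (\<theta>' * (\<theta>' - 1)) * (gap_bound (Suc k) - gap_bound k + D)"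
    by (simp add: algebra_simps power2_eq_square)
  also have "\<dots> \<le> \<theta>' * (g (x (Suc k)) \<bullet> (x (Suc k) - xs))
        + (\<theta>' * (\<theta>' - 1)) * (g (x (Suc k)) \<bullet> (x (Suc k) - y (Suc k)))"
    using gap_bound_le_inner_gradient gap_bound_Suc_le \<theta>_pos[of "Suc k"] \<theta>_Suc_ge_1[of k]
    unfolding \<theta>'_def D_def by (intro add_mono mult_left_mono) auto
  also have "\<dots> = \<theta>' * (g (x (Suc k)) \<bullet> (z (Suc k) - xs))"
    unfolding z_Suc_minus_minimizer \<theta>'_def by (simp add: inner_add_right algebra_simps)
  finally show ?thesis
    unfolding \<theta>'_def D_def .
qed

lemma scaled_dist_z_Suc:
  "L / (4 * t) * (qnorm Q (z (Suc k) - xs))\<^sup>2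
     = L / (4 * t) * (qnorm Q (z k - xs))\<^sup>2 - \<theta> k * (g (x k) \<bullet> (z k - xs))
       + t * (\<theta> k)\<^sup>2 * (qdnorm Q (g (x k)))\<^sup>2 / L"
proof -
  have "z (Suc k) - xs = (z k - xs) - (2 * t * \<theta> k / L) *\<^sub>R (matrix_inv Q *v g (x k))"
    unfolding z_Suc by simp
  then have "(qnorm Q (z (Suc k) - xs))\<^sup>2 = (qnorm Q (z k - xs))\<^sup>2
      - 2 * (2 * t * \<theta> k / L) * (g (x k) \<bullet> (z k - xs)) + (2 * t * \<theta> k / L)\<^sup>2 * (qdnorm Q (g (x k)))\<^sup>2"
    by (simp only: qnorm_diff_scaled_dual_square)
  then show ?thesis
    using L_pos t_pos by (simp add: field_simps power2_eq_square)
qed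

lemma potential_0_le: "potential 0 \<le> L / (4 * t) * (qnorm Q (x 0 - xs))\<^sup>2"
proof -
  have "potential 0 = gap_bound 0 + L / (4 * t) * (qnorm Q (x 0 - xs))\<^sup>2
      - g (x 0) \<bullet> (x 0 - xs) + t * (qdnorm Q (g (x 0)))\<^sup>2 / L"
    unfolding potential_def scaled_dist_z_Suc \<theta>_0 z_0 by simp
  moreover have "t * (qdnorm Q (g (x 0)))\<^sup>2 / L \<le> (qdnorm Q (g (x 0)))\<^sup>2 / L"
    using t_pos t_le_1 L_pos by (intro divide_right_mono mult_left_le_one_le) auto
  ultimately show ?thesis
    using gap_bound_le_inner_gradient[of 0] by linarith
qed

lemma potential_Suc_le: "potential (Suc k) \<le> potential k"
proof -
  let ?\<theta> = "\<theta> (Suc k)" and ?D = "(qdnorm Q (g (x (Suc k))))\<^sup>2 / L"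
  have "potential (Suc k) = ?\<theta>\<^sup>2 * gap_bound (Suc k) + L / (4 * t) * (qnorm Q (z (Suc k) - xs))\<^sup>2
      - ?\<theta> * (g (x (Suc k)) \<bullet> (z (Suc k) - xs)) + t * ?\<theta>\<^sup>2 * ?D"
    unfolding potential_def scaled_dist_z_Suc[of "Suc k"] by simp
  also have "\<dots> \<le> L / (4 * t) * (qnorm Q (z (Suc k) - xs))\<^sup>2
      + (?\<theta>\<^sup>2 - ?\<theta>) * gap_bound k - (1 - t) * ?\<theta>\<^sup>2 * ?D"
    using inner_gradient_z_Suc_ge[of k] by (simp add: algebra_simps)
  also have "\<dots> \<le> potential k"
  proof -
    have "(?\<theta>\<^sup>2 - ?\<theta>) * gap_bound k \<le> (\<theta> k)\<^sup>2 * gap_bound k"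
      using \<theta>_Suc_upper gap_bound_nonneg by (rule mult_right_mono)
    moreover have "0 \<le> (1 - t) * ?\<theta>\<^sup>2 * ?D"
      using t_le_1 L_pos by simp
    ultimately show ?thesis
      unfolding potential_def by linarith
  qed
  finally show ?thesis .
qed

lemma potential_le: "potential k \<le> L / (4 * t) * (qnorm Q (x 0 - xs))\<^sup>2"
proof (induction k)
  case 0
  show ?case by (rule potential_0_le)
next
  case (Suc k)
  then show ?case
    using potential_Suc_le[of k] by linarith
qed

theorem convergence_rate:
  "f (y (Suc k)) - f xs \<le> L * (qnorm Q (x 0 - xs))\<^sup>2 / (4 * t * (\<theta> k)\<^sup>2)"
proof -
  have "(\<theta> k)\<^sup>2 * (f (y (Suc k)) - f xs) \<le> (\<theta> k)\<^sup>2 * gap_bound k"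
    using f_y_Suc_le_gap_bound by (simp add: mult_left_mono)
  also have "\<dots> \<le> potential k"
    unfolding potential_def using L_pos t_pos by simp
  also have "\<dots> \<le> L / (4 * t) * (qnorm Q (x 0 - xs))\<^sup>2"
    by (rule potential_le)
  finally show ?thesis
    using \<theta>_pos[of k] t_pos by (simp add: field_simps)
qed

end

theorem corollary5:
  fixes Q :: "real^'n^'n" and f :: "real^'n \<Rightarrow> real" and g :: "real^'n \<Rightarrow> real^'n"
    and L t :: real and xs :: "real^'n" and \<theta> :: "nat \<Rightarrow> real"
    and x y z :: "nat \<Rightarrow> real^'n"
  assumes Q_sym: "transpose Q = Q"
    and Q_pd: "\<forall>v. v \<noteq> 0 \<longrightarrow> v \<bullet> (Q *v v) > 0"
    and f_convex: "convex_on UNIV f"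
    and f_grad: "\<forall>u. (f has_derivative (\<lambda>h. g u \<bullet> h)) (at u)"
    and L_pos: "L > 0"
    and g_lip: "\<forall>u v. qdnorm Q (g u - g v) \<le> L * qnorm Q (u - v)"
    and xs_min: "\<forall>u. f xs \<le> f u"
    and t_pos: "0 < t" and t_le: "t \<le> 1"
    and \<theta>_pos: "\<forall>k. \<theta> k > 0"
    and \<theta>_0: "\<theta> 0 = 1"
    and \<theta>_rec: "\<forall>k. 0 \<le> (\<theta> (Suc k))\<^sup>2 - \<theta> (Suc k) \<and> (\<theta> (Suc k))\<^sup>2 - \<theta> (Suc k) \<le> (\<theta> k)\<^sup>2"
    and z_0: "z 0 = x 0"
    and y_step: "\<forall>k. y (Suc k) = x k - (1 / L) *\<^sub>R (matrix_inv Q *v g (x k))"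
    and z_step: "\<forall>k. z (Suc k) = z k - (2 * t * \<theta> k / L) *\<^sub>R (matrix_inv Q *v g (x k))"
    and x_step: "\<forall>k. x (Suc k) = (1 - 1 / \<theta> (Suc k)) *\<^sub>R y (Suc k) + (1 / \<theta> (Suc k)) *\<^sub>R z (Suc k)"
  shows "\<forall>k\<ge>1. f (y k) - f xs \<le> L * (qnorm Q (x 0 - xs))\<^sup>2 / (4 * t * (\<theta> (k - 1))\<^sup>2)"
proof (intro allI impI)
  interpret accelerated_gradient_method Q f g L t \<theta> x y z xs
    using assms by unfold_locales auto
  fix k :: nat
  assume "k \<ge> 1"
  then obtain m where "k = Suc m"
    by (cases k) auto
  then show "f (y k) - f xs \<le> L * (qnorm Q (x 0 - xs))\<^sup>2 / (4 * t * (\<theta> (k - 1))\<^sup>2)"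
    using convergence_rate[of m] by simp
qed

end
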